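(* Let $\mathcal{M}=(E,\rho)$ be a $q$-matroid. (a) If $F$ is a flat, then $\mathrm{cyc}(F)$ is a flat. (b) If $F$ is open (cyclic), then $\mathrm{cl}(F)$ is open. As a consequence, every subspace $V\le E$ satisfies $\mathrm{cl}(\mathrm{cyc}(V))\le\mathrm{cyc}(\mathrm{cl}(V))$, and both of these spaces are cyclic flats.
   Context: Let $\mathbb{F}=\mathbb{F}_q$. A $q$-matroid is $\mathcal{M}=(E,\rho)$, $E$ a finite-dimensional $\mathbb{F}$-vector space, $\rho$ from subspaces to $\mathbb{Z}_{\ge0}$ with $0\le\rho(V)\le\dim V$, monotone and submodular. Flat: $\rho(F+\langle x\rangle)>\rho(F)$ for all $x\notin F$. Closure: $\mathrm{cl}(V)=\sum\{\langle x\rangle:\rho(V+\langle x\rangle)=\rho(V)\}$. Independent: $\rho(V)=\dim V$; circuit: dependent subspace with all proper subspaces independent; open: sum of circuits (empty sum $=0$). Cyclic core: $\mathrm{cyc}(V)=\{x\in V\mid\rho(W)=\rho(V)\text{ for all }W\le V\text{ with }W+\langle x\rangle=V\}$; $V$ is cyclic if $\mathrm{cyc}(V)=V$, which is equivalent to $V$ being open. A cyclic flat is a subspace that is both a flat and cyclic. *)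

theory Defs
  imports Complex_Main
begin

text \<open>The ambient space E is the whole carrier type 'v, a finite-dimensional vector
space over the finite field 'f (given by the scalar multiplication scale).
Subspaces are subsets of 'v that are linear subspaces; V + W is span (V \<union> W).\<close>

definition qmatroid :: "('f::{field,finite} \<Rightarrow> 'v::ab_group_add \<Rightarrow> 'v) \<Rightarrow> ('v set \<Rightarrow> nat) \<Rightarrow> bool" where
  "qmatroid scale \<rho> \<longleftrightarrow>
     (\<exists>B. finite_dimensional_vector_space scale B) \<and>
     (\<forall>V. module.subspace scale V \<longrightarrow> 0 \<le> \<rho> V \<and> \<rho> V \<le> vector_space.dim scale V) \<and>
     (\<forall>V W. module.subspace scale V \<and> module.subspace scale W \<and> V \<subseteq> W \<longrightarrow> \<rho> V \<le> \<rho> W) \<and>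
     (\<forall>V W. module.subspace scale V \<and> module.subspace scale W \<longrightarrow>
        \<rho> (module.span scale (V \<union> W)) + \<rho> (V \<inter> W) \<le> \<rho> V + \<rho> W)"

definition qflat :: "('f::field \<Rightarrow> 'v::ab_group_add \<Rightarrow> 'v) \<Rightarrow> ('v set \<Rightarrow> nat) \<Rightarrow> 'v set \<Rightarrow> bool" where
  "qflat scale \<rho> F \<longleftrightarrow> module.subspace scale F \<and>
     (\<forall>x. x \<notin> F \<longrightarrow> \<rho> (module.span scale (F \<union> module.span scale {x})) > \<rho> F)"

definition qcl :: "('f::field \<Rightarrow> 'v::ab_group_add \<Rightarrow> 'v) \<Rightarrow> ('v set \<Rightarrow> nat) \<Rightarrow> 'v set \<Rightarrow> 'v set" where
  "qcl scale \<rho> V = module.span scale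
     (\<Union>{module.span scale {x} | x.
        \<rho> (module.span scale (V \<union> module.span scale {x})) = \<rho> V})"

definition qindep :: "('f::field \<Rightarrow> 'v::ab_group_add \<Rightarrow> 'v) \<Rightarrow> ('v set \<Rightarrow> nat) \<Rightarrow> 'v set \<Rightarrow> bool" where
  "qindep scale \<rho> V \<longleftrightarrow> \<rho> V = vector_space.dim scale V"

definition qcircuit :: "('f::field \<Rightarrow> 'v::ab_group_add \<Rightarrow> 'v) \<Rightarrow> ('v set \<Rightarrow> nat) \<Rightarrow> 'v set \<Rightarrow> bool" where
  "qcircuit scale \<rho> C \<longleftrightarrow> module.subspace scale C \<and> \<not> qindep scale \<rho> C \<and>
     (\<forall>D. module.subspace scale D \<and> D \<subset> C \<longrightarrow> qindep scale \<rho> D)"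

definition qopen :: "('f::field \<Rightarrow> 'v::ab_group_add \<Rightarrow> 'v) \<Rightarrow> ('v set \<Rightarrow> nat) \<Rightarrow> 'v set \<Rightarrow> bool" where
  "qopen scale \<rho> V \<longleftrightarrow> (\<exists>S. (\<forall>C\<in>S. qcircuit scale \<rho> C) \<and> V = module.span scale (\<Union>S))"

definition qcyc :: "('f::field \<Rightarrow> 'v::ab_group_add \<Rightarrow> 'v) \<Rightarrow> ('v set \<Rightarrow> nat) \<Rightarrow> 'v set \<Rightarrow> 'v set" where
  "qcyc scale \<rho> V = {x \<in> V. \<forall>W. module.subspace scale W \<and> W \<subseteq> V \<and>
       module.span scale (W \<union> module.span scale {x}) = V \<longrightarrow> \<rho> W = \<rho> V}"

definition qcyclic :: "('f::field \<Rightarrow> 'v::ab_group_add \<Rightarrow> 'v) \<Rightarrow> ('v set \<Rightarrow> nat) \<Rightarrow> 'v set \<Rightarrow> bool" where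
  "qcyclic scale \<rho> V \<longleftrightarrow> qcyc scale \<rho> V = V"

definition qcyclic_flat :: "('f::field \<Rightarrow> 'v::ab_group_add \<Rightarrow> 'v) \<Rightarrow> ('v set \<Rightarrow> nat) \<Rightarrow> 'v set \<Rightarrow> bool" where
  "qcyclic_flat scale \<rho> V \<longleftrightarrow> qflat scale \<rho> V \<and> qcyclic scale \<rho> V"

end

theory Submission
  imports Defs
begin

text \<open>For a subspace V, cyc V consists of the points of V lying in every hyperplane H of V
with rho H < rho V: a space W as in the definition of cyc that misses x is exactly a hyperplane
of V missing x. By submodularity such a hyperplane meets every subspace A <= V with A not
contained in H in a subspace of smaller rank than A, because A + H = V. Consequently
cyc V <= cyc G whenever V <= G and rho V = rho G; for G = cl V this shows that closures of
cyclic spaces are cyclic and, by minimality of the closure, that cl (cyc V) <= cyc (cl V).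
For a flat F, adjoining x outside cyc F to cyc F raises the rank: for x in F by the hyperplane
argument, and for x outside F since F meets cyc F + <x> only in cyc F while F + <x> has larger
rank than F. Circuits enter only through the identification of open and cyclic spaces:
cyc X is the sum of the circuits contained in X, since a hyperplane of X of full rank
always misses some circuit of X.\<close>

section \<open>Spans and hyperplanes\<close>

definition hyperplane_of :: "('f::field \<Rightarrow> 'v::ab_group_add \<Rightarrow> 'v) \<Rightarrow> 'v set \<Rightarrow> 'v set \<Rightarrow> bool" where
  "hyperplane_of scale H V \<longleftrightarrow>
     module.subspace scale H \<and> (\<exists>a. a \<notin> H \<and> module.span scale (insert a H) = V)"

context vector_space
begin

lemmas span_of_subspace = span_eq_iff[THEN iffD2]

lemma span_Un_span: "span (A \<union> span B) = span (A \<union> B)"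
proof (rule subset_antisym)
  show "span (A \<union> span B) \<subseteq> span (A \<union> B)"
    by (rule span_minimal) (auto intro: span_base span_mono[of B "A \<union> B", THEN subsetD])
  show "span (A \<union> B) \<subseteq> span (A \<union> span B)"
    by (rule span_mono) (auto intro: span_base)
qed

lemma span_Un_span_singleton: "span (A \<union> span {x}) = span (insert x A)"
  by (simp add: span_Un_span)

lemma span_insert_subspace: "subspace A \<Longrightarrow> x \<in> A \<Longrightarrow> span (insert x A) = A"
  by (simp add: span_redundant span_base)

lemma subspace_inter_span_insert:
  assumes K: "subspace K" and F: "subspace F" and "K \<subseteq> F" and x: "x \<notin> F"
  shows "F \<inter> span (insert x K) = K"
proof
  show "K \<subseteq> F \<inter> span (insert x K)" using \<open>K \<subseteq> F\<close> by (auto intro: span_base)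
  show "F \<inter> span (insert x K) \<subseteq> K"
  proof
    fix y assume y: "y \<in> F \<inter> span (insert x K)"
    then obtain k where k: "y - k *s x \<in> K"
      using K by (auto simp: span_breakdown_eq span_of_subspace)
    have "k = 0"
    proof (rule ccontr)
      assume "k \<noteq> 0"
      have "k *s x \<in> F"
        using subspace_diff[OF F, of y "y - k *s x"] y k \<open>K \<subseteq> F\<close> by auto
      then have "inverse k *s (k *s x) \<in> F" by (rule subspace_scale[OF F])
      with \<open>k \<noteq> 0\<close> x show False by simp
    qed
    with k show "y \<in> K" by simp
  qed
qed

lemma hyperplane_subset: "hyperplane_of scale H V \<Longrightarrow> H \<subseteq> V"
  unfolding hyperplane_of_def by (auto intro: span_base)

lemma hyperplane_subspace: "hyperplane_of scale H V \<Longrightarrow> subspace V"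
  unfolding hyperplane_of_def by auto

lemma hyperplane_span_insert:
  assumes "hyperplane_of scale H V" and "a \<in> V" and "a \<notin> H"
  shows "span (insert a H) = V"
proof -
  obtain x where H: "subspace H" and x: "x \<notin> H" "span (insert x H) = V"
    using assms(1) unfolding hyperplane_of_def by blast
  have "a \<in> span (insert x H)" using x(2) \<open>a \<in> V\<close> by simp
  moreover have "a \<notin> span H" using \<open>a \<notin> H\<close> H by (simp add: span_of_subspace)
  ultimately have "x \<in> span (insert a H)" by (rule in_span_insert)
  then have "V \<subseteq> span (insert a H)"
    unfolding x(2)[symmetric] by (intro span_minimal) (auto intro: span_base)
  moreover have "span (insert a H) \<subseteq> V"
    using hyperplane_subset[OF assms(1)] hyperplane_subspace[OF assms(1)] \<open>a \<in> V\<close>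
    by (intro span_minimal) auto
  ultimately show ?thesis by blast
qed

lemma hyperplane_span_Un:
  assumes "hyperplane_of scale H V" and "A \<subseteq> V" and "a \<in> A" and "a \<notin> H"
  shows "span (A \<union> H) = V"
proof
  show "span (A \<union> H) \<subseteq> V"
    using hyperplane_subset[OF assms(1)] hyperplane_subspace[OF assms(1)] \<open>A \<subseteq> V\<close>
    by (intro span_minimal) auto
  have "V = span (insert a H)"
    using hyperplane_span_insert[OF assms(1)] assms(2-4) by blast
  also have "\<dots> \<subseteq> span (A \<union> H)"
    using \<open>a \<in> A\<close> by (intro span_mono) auto
  finally show "V \<subseteq> span (A \<union> H)" .
qed

lemma hyperplane_inter:
  assumes "hyperplane_of scale H V" and A: "subspace A" "A \<subseteq> V" and a: "a \<in> A" "a \<notin> H"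
  shows "hyperplane_of scale (A \<inter> H) A"
  unfolding hyperplane_of_def
proof (intro conjI exI)
  have H: "subspace H" using assms(1) by (simp add: hyperplane_of_def)
  show "subspace (A \<inter> H)" using A(1) H by (rule subspace_inter)
  show "a \<notin> A \<inter> H" using a by simp
  show "span (insert a (A \<inter> H)) = A"
  proof
    show "span (insert a (A \<inter> H)) \<subseteq> A" using a A by (intro span_minimal) auto
    have V: "span (insert a H) = V"
      using hyperplane_span_insert[OF assms(1)] a A(2) by blast
    show "A \<subseteq> span (insert a (A \<inter> H))"
    proof
      fix y assume y: "y \<in> A"
      then have "y \<in> span (insert a H)" using V A(2) by blast
      then obtain k where "y - k *s a \<in> H"
        using H by (auto simp: span_breakdown_eq span_of_subspace)
      moreover have "y - k *s a \<in> A" using y a A by (simp add: subspace_diff subspace_scale)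
      ultimately have "y - k *s a \<in> span (A \<inter> H)" by (intro span_base) simp
      then show "y \<in> span (insert a (A \<inter> H))" unfolding span_breakdown_eq by blast
    qed
  qed
qed

lemma exists_hyperplane:
  assumes S: "subspace S" and X: "subspace X" and "S \<subseteq> X" and x: "x \<in> X" "x \<notin> S"
  obtains H where "hyperplane_of scale H X" "S \<subseteq> H" "x \<notin> H"
proof -
  obtain B0 where B0: "B0 \<subseteq> S" "independent B0" "S \<subseteq> span B0"
    by (rule basis_exists)
  have "x \<notin> span B0" using x B0 S span_minimal by blast
  then have "independent (insert x B0)" using B0 by (intro independent_insertI)
  moreover have "insert x B0 \<subseteq> X" using B0 \<open>S \<subseteq> X\<close> x by auto
  ultimately obtain B where B: "insert x B0 \<subseteq> B" "B \<subseteq> X" "independent B" "X \<subseteq> span B"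
    using maximal_independent_subset_extend by metis
  let ?H = "span (B - {x})"
  have "x \<notin> ?H"
    using B(1,3) unfolding dependent_def by blast
  moreover have "S \<subseteq> ?H"
    using B(1) B0(1,3) x(2) span_mono[of B0 "B - {x}"] by blast
  moreover have "span (insert x ?H) = X"
  proof -
    have "insert x (B - {x}) = B" using B(1) by auto
    then have "span (insert x ?H) = span B"
      using span_Un_span[of "{x}" "B - {x}"] by simp
    also have "\<dots> = X" using B(2,4) X by (intro subset_antisym span_minimal) auto
    finally show ?thesis .
  qed
  ultimately show ?thesis using that unfolding hyperplane_of_def by blast
qed

end

context finite_dimensional_vector_space
begin

lemma dim_hyperplane:
  assumes "hyperplane_of scale H V"
  shows "dim V = dim H + 1"
proof -
  obtain a where H: "subspace H" and a: "a \<notin> H" "span (insert a H) = V"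
    using assms unfolding hyperplane_of_def by blast
  have "dim V = dim (insert a H)" using a(2) dim_span[of "insert a H"] by simp
  also have "\<dots> = dim H + 1" using a(1) H by (simp add: dim_insert span_of_subspace)
  finally show ?thesis .
qed

end

locale q_matroid = finite_dimensional_vector_space scale Basis
  for scale :: "'f::field \<Rightarrow> 'v::ab_group_add \<Rightarrow> 'v" and Basis +
  fixes \<rho> :: "'v set \<Rightarrow> nat"
  assumes rank_le_dim: "subspace V \<Longrightarrow> \<rho> V \<le> dim V"
    and rank_mono: "subspace V \<Longrightarrow> subspace W \<Longrightarrow> V \<subseteq> W \<Longrightarrow> \<rho> V \<le> \<rho> W"
    and rank_submod: "subspace V \<Longrightarrow> subspace W \<Longrightarrow> \<rho> (span (V \<union> W)) + \<rho> (V \<inter> W) \<le> \<rho> V + \<rho> W"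
begin

lemma rank_span_insert_le:
  assumes "subspace A" shows "\<rho> (span (insert x A)) \<le> \<rho> A + 1"
proof -
  have "dim {x} \<le> 1" using dim_insert[of x "{}"] by simp
  then have "\<rho> (span {x}) \<le> 1" using rank_le_dim[of "span {x}"] by simp
  then show ?thesis
    using rank_submod[OF assms subspace_span[of "{x}"]] by (simp add: span_Un_span_singleton)
qed

lemma rank_span_Un_eq:
  assumes A: "subspace A" and Y: "\<And>y. y \<in> Y \<Longrightarrow> \<rho> (span (insert y A)) = \<rho> A"
  shows "\<rho> (span (A \<union> Y)) = \<rho> A"
proof -
  have finite_case: "\<rho> (span (A \<union> Z)) = \<rho> A" if "finite Z" "Z \<subseteq> Y" for Z
    using that
  proof (induction Z rule: finite_induct)
    case empty
    then show ?case using A by (simp add: span_of_subspace)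
  next
    case (insert z Z)
    define B where "B = span (A \<union> Z)"
    define W where "W = span (insert z A)"
    have rB: "\<rho> B = \<rho> A" and rW: "\<rho> W = \<rho> A" using insert Y by (auto simp: B_def W_def)
    have "span (B \<union> W) = span (insert z A \<union> (A \<union> Z))"
      unfolding B_def W_def by (metis span_Un_span sup_commute)
    also have "insert z A \<union> (A \<union> Z) = A \<union> insert z Z" by auto
    finally have BW: "span (B \<union> W) = span (A \<union> insert z Z)" .
    have "A \<subseteq> B \<inter> W" unfolding B_def W_def by (auto intro: span_base)
    then have "\<rho> A \<le> \<rho> (B \<inter> W)"
      using A by (intro rank_mono) (auto simp: B_def W_def intro: subspace_inter)
    moreover have "\<rho> (span (B \<union> W)) + \<rho> (B \<inter> W) \<le> \<rho> B + \<rho> W"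
      by (rule rank_submod) (auto simp: B_def W_def)
    moreover have "\<rho> A \<le> \<rho> (span (A \<union> insert z Z))"
      using A by (intro rank_mono) (auto intro: span_base)
    ultimately show ?case using rB rW BW by simp
  qed
  obtain B where B: "B \<subseteq> Y" "independent B" "Y \<subseteq> span B"
    by (rule basis_exists)
  have "span (A \<union> Y) \<subseteq> span (A \<union> span B)" using B(3) by (intro span_mono) auto
  moreover have "span (A \<union> B) \<subseteq> span (A \<union> Y)" using B(1) by (intro span_mono) auto
  ultimately have "span (A \<union> Y) = span (A \<union> B)" by (simp add: span_Un_span)
  then show ?thesis using finite_case[of B] B finiteI_independent by simp
qed

lemma rank_inter_hyperplane_less:
  assumes "hyperplane_of scale H V" and "\<rho> H < \<rho> V"
    and "subspace A" and "A \<subseteq> V" and "a \<in> A" and "a \<notin> H"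
  shows "\<rho> (A \<inter> H) < \<rho> A"
proof -
  have "subspace H" using assms(1) by (simp add: hyperplane_of_def)
  with assms show ?thesis
    using rank_submod[OF \<open>subspace A\<close> \<open>subspace H\<close>] hyperplane_span_Un[OF assms(1,4-6)] by simp
qed

section \<open>Cyclic cores\<close>

lemma qcyc_iff:
  "x \<in> qcyc scale \<rho> V \<longleftrightarrow>
     x \<in> V \<and> (\<forall>H. hyperplane_of scale H V \<and> \<rho> H < \<rho> V \<longrightarrow> x \<in> H)"
proof -
  have "(\<forall>W. subspace W \<and> W \<subseteq> V \<and> span (insert x W) = V \<longrightarrow> \<rho> W = \<rho> V) \<longleftrightarrow>
        (\<forall>H. hyperplane_of scale H V \<and> \<rho> H < \<rho> V \<longrightarrow> x \<in> H)" if "x \<in> V"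
  proof (intro iffI allI impI)
    fix H assume all: "\<forall>W. subspace W \<and> W \<subseteq> V \<and> span (insert x W) = V \<longrightarrow> \<rho> W = \<rho> V"
      and H: "hyperplane_of scale H V \<and> \<rho> H < \<rho> V"
    show "x \<in> H"
    proof (rule ccontr)
      assume "x \<notin> H"
      then have "span (insert x H) = V" using H hyperplane_span_insert \<open>x \<in> V\<close> by blast
      then have "\<rho> H = \<rho> V" using all H hyperplane_subset[of H V] by (auto simp: hyperplane_of_def)
      with H show False by simp
    qed
  next
    fix W assume all: "\<forall>H. hyperplane_of scale H V \<and> \<rho> H < \<rho> V \<longrightarrow> x \<in> H"
      and W: "subspace W \<and> W \<subseteq> V \<and> span (insert x W) = V"
    show "\<rho> W = \<rho> V"
    proof (cases "x \<in> W")
      case True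
      then have "W = V" using W span_insert_subspace[of W x] by simp
      then show ?thesis by simp
    next
      case False
      then have hyp: "hyperplane_of scale W V" using W by (auto simp: hyperplane_of_def)
      then have "\<rho> W \<le> \<rho> V" using W hyperplane_subspace[OF hyp] by (intro rank_mono) auto
      moreover have "\<not> \<rho> W < \<rho> V" using all hyp False by blast
      ultimately show ?thesis by simp
    qed
  qed
  then show ?thesis unfolding qcyc_def span_Un_span_singleton by blast
qed

lemma qcyc_subset: "qcyc scale \<rho> V \<subseteq> V"
  by (auto simp: qcyc_iff)

lemma subspace_qcyc:
  assumes "subspace V" shows "subspace (qcyc scale \<rho> V)"
proof -
  have "qcyc scale \<rho> V = V \<inter> \<Inter>{H. hyperplane_of scale H V \<and> \<rho> H < \<rho> V}"
    by (auto simp: qcyc_iff)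
  then show ?thesis
    using assms by (auto intro!: subspace_inter subspace_Inter simp: hyperplane_of_def)
qed

lemma qcyc_subset_qcyc_of_rank_eq:
  assumes V: "subspace V" and "V \<subseteq> G" and "\<rho> V = \<rho> G"
  shows "qcyc scale \<rho> V \<subseteq> qcyc scale \<rho> G"
proof
  fix x assume x: "x \<in> qcyc scale \<rho> V"
  then have "x \<in> V" by (simp add: qcyc_iff)
  moreover have "x \<in> H" if H: "hyperplane_of scale H G" "\<rho> H < \<rho> G" for H
  proof (rule ccontr)
    assume "x \<notin> H"
    have "hyperplane_of scale (V \<inter> H) V"
      using hyperplane_inter[OF H(1) V \<open>V \<subseteq> G\<close> \<open>x \<in> V\<close> \<open>x \<notin> H\<close>] .
    moreover have "\<rho> (V \<inter> H) < \<rho> V"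
      using rank_inter_hyperplane_less[OF H V \<open>V \<subseteq> G\<close> \<open>x \<in> V\<close> \<open>x \<notin> H\<close>] .
    ultimately have "x \<in> V \<inter> H" using x unfolding qcyc_iff by blast
    with \<open>x \<notin> H\<close> show False by simp
  qed
  ultimately show "x \<in> qcyc scale \<rho> G" using \<open>V \<subseteq> G\<close> by (auto simp: qcyc_iff)
qed

section \<open>Closure and flats\<close>

lemma qflat_iff:
  "qflat scale \<rho> F \<longleftrightarrow> subspace F \<and> (\<forall>x. x \<notin> F \<longrightarrow> \<rho> F < \<rho> (span (insert x F)))"
  unfolding qflat_def by (simp add: span_Un_span_singleton)

lemma qcl_eq: "qcl scale \<rho> V = span {x. \<rho> (span (insert x V)) = \<rho> V}"
proof -
  let ?X = "{x. \<rho> (span (insert x V)) = \<rho> V}"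
  have "span (\<Union>{span {x} | x. x \<in> ?X}) = span ?X"
  proof
    show "span (\<Union>{span {x} | x. x \<in> ?X}) \<subseteq> span ?X"
      by (rule span_minimal) (auto intro: span_mono[THEN subsetD, rotated])
    show "span ?X \<subseteq> span (\<Union>{span {x} | x. x \<in> ?X})"
      by (rule span_mono) (auto intro: span_base)
  qed
  then show ?thesis unfolding qcl_def by (simp add: span_Un_span_singleton)
qed

lemma subspace_qcl: "subspace (qcl scale \<rho> V)"
  unfolding qcl_eq by simp

lemma subset_qcl: "subspace V \<Longrightarrow> V \<subseteq> qcl scale \<rho> V"
  unfolding qcl_eq by (auto intro!: span_base simp: span_insert_subspace)

lemma rank_qcl:
  assumes V: "subspace V" shows "\<rho> (qcl scale \<rho> V) = \<rho> V"
proof -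
  let ?X = "{x. \<rho> (span (insert x V)) = \<rho> V}"
  have "V \<subseteq> ?X" using V by (auto simp: span_insert_subspace)
  then have "qcl scale \<rho> V = span (V \<union> ?X)" unfolding qcl_eq by (simp add: Un_absorb1)
  also have "\<rho> \<dots> = \<rho> V" by (rule rank_span_Un_eq[OF V]) simp
  finally show ?thesis .
qed

lemma qflat_qcl:
  assumes V: "subspace V" shows "qflat scale \<rho> (qcl scale \<rho> V)"
  unfolding qflat_iff
proof (intro conjI allI impI subspace_qcl)
  fix x assume x: "x \<notin> qcl scale \<rho> V"
  have "\<rho> V \<le> \<rho> (span (insert x V))"
    using V by (intro rank_mono) (auto intro: span_base)
  moreover have "\<rho> (span (insert x V)) \<noteq> \<rho> V"
    using x unfolding qcl_eq by (auto intro: span_base)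
  moreover have "\<rho> (span (insert x V)) \<le> \<rho> (span (insert x (qcl scale \<rho> V)))"
    using subset_qcl[OF V] by (intro rank_mono span_mono) auto
  ultimately show "\<rho> (qcl scale \<rho> V) < \<rho> (span (insert x (qcl scale \<rho> V)))"
    using rank_qcl[OF V] by simp
qed

lemma qcl_subset_qflat:
  assumes V: "subspace V" and F: "qflat scale \<rho> F" and "V \<subseteq> F"
  shows "qcl scale \<rho> V \<subseteq> F"
  unfolding qcl_eq
proof (intro span_minimal subsetI)
  show Fs: "subspace F" using F by (simp add: qflat_iff)
  fix x assume "x \<in> {x. \<rho> (span (insert x V)) = \<rho> V}"
  then have hx: "\<rho> (span (insert x V)) = \<rho> V" by simp
  show "x \<in> F"
  proof (rule ccontr)
    assume "x \<notin> F"
    let ?W = "span (insert x V)"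
    have "span (F \<union> ?W) = span (insert x F)"
      using \<open>V \<subseteq> F\<close> span_Un_span[of F "insert x V"] by (simp add: Un_absorb2)
    moreover have "\<rho> V \<le> \<rho> (F \<inter> ?W)"
      using V \<open>V \<subseteq> F\<close> Fs by (intro rank_mono) (auto intro: span_base subspace_inter)
    moreover have "\<rho> (span (F \<union> ?W)) + \<rho> (F \<inter> ?W) \<le> \<rho> F + \<rho> ?W"
      using Fs by (intro rank_submod) auto
    ultimately have "\<rho> (span (insert x F)) \<le> \<rho> F" using hx by simp
    with F \<open>x \<notin> F\<close> show False by (auto simp: qflat_iff)
  qed
qed

lemma qflat_qcyc:
  assumes F: "qflat scale \<rho> F" shows "qflat scale \<rho> (qcyc scale \<rho> F)"
  unfolding qflat_iff
proof (intro conjI allI impI)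
  let ?K = "qcyc scale \<rho> F"
  have Fs: "subspace F" using F by (simp add: qflat_iff)
  show Ks: "subspace ?K" by (rule subspace_qcyc[OF Fs])
  fix x assume x: "x \<notin> ?K"
  let ?A = "span (insert x ?K)"
  show "\<rho> ?K < \<rho> ?A"
  proof (cases "x \<in> F")
    case True
    then obtain H where H: "hyperplane_of scale H F" "\<rho> H < \<rho> F" and "x \<notin> H"
      using x by (auto simp: qcyc_iff)
    have "?A \<subseteq> F" using qcyc_subset True Fs by (intro span_minimal) auto
    then have less: "\<rho> (?A \<inter> H) < \<rho> ?A"
      using rank_inter_hyperplane_less[OF H] \<open>x \<notin> H\<close> by (auto intro: span_base)
    have "?K \<subseteq> H" using H qcyc_iff by blast
    then have "?K \<subseteq> ?A \<inter> H" by (auto intro: span_base)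
    then have "\<rho> ?K \<le> \<rho> (?A \<inter> H)"
      using Ks H(1) by (intro rank_mono subspace_inter) (auto simp: hyperplane_of_def)
    with less show ?thesis by simp
  next
    case False
    have "span (F \<union> ?A) = span (insert x F)"
      using qcyc_subset[of F] span_Un_span[of F "insert x ?K"] by (simp add: Un_absorb2)
    moreover have "F \<inter> ?A = ?K"
      by (rule subspace_inter_span_insert[OF Ks Fs qcyc_subset False])
    moreover have "\<rho> (span (F \<union> ?A)) + \<rho> (F \<inter> ?A) \<le> \<rho> F + \<rho> ?A"
      using Fs by (intro rank_submod) auto
    moreover have "\<rho> F < \<rho> (span (insert x F))" using F False by (simp add: qflat_iff)
    ultimately show ?thesis by simp
  qed
qed

lemma qcyc_subset_qcyc_qcl:
  "subspace V \<Longrightarrow> qcyc scale \<rho> V \<subseteq> qcyc scale \<rho> (qcl scale \<rho> V)"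
  by (intro qcyc_subset_qcyc_of_rank_eq subset_qcl rank_qcl[symmetric])

lemma qcyc_qcl_eq:
  assumes F: "subspace F" and cyclic: "qcyc scale \<rho> F = F"
  shows "qcyc scale \<rho> (qcl scale \<rho> F) = qcl scale \<rho> F"
proof -
  have "\<not> \<rho> H < \<rho> (qcl scale \<rho> F)" if H: "hyperplane_of scale H (qcl scale \<rho> F)" for H
  proof
    assume lt: "\<rho> H < \<rho> (qcl scale \<rho> F)"
    have "F \<subseteq> H"
      using qcyc_subset_qcyc_qcl[OF F] H lt unfolding cyclic by (auto simp: qcyc_iff)
    then have "\<rho> F \<le> \<rho> H" using F H by (intro rank_mono) (auto simp: hyperplane_of_def)
    with lt show False using rank_qcl[OF F] by simp
  qed
  then show ?thesis by (auto simp: qcyc_iff)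
qed

section \<open>Circuits and open subspaces\<close>

lemma rank_le_rank_add_dim_diff:
  "subspace A \<Longrightarrow> subspace B \<Longrightarrow> A \<subseteq> B \<Longrightarrow> \<rho> B \<le> \<rho> A + (dim B - dim A)"
proof (induction "dim B - dim A" arbitrary: A rule: less_induct)
  case less
  show ?case
  proof (cases "A = B")
    case True
    then show ?thesis by simp
  next
    case False
    then obtain b where b: "b \<in> B" "b \<notin> A" using less.prems by blast
    let ?A' = "span (insert b A)"
    have "?A' \<subseteq> B" using b less.prems by (intro span_minimal) auto
    then have le: "dim ?A' \<le> dim B" by (rule dim_subset)
    have dim_A': "dim ?A' = dim A + 1"
      using less.prems(1) b(2) by (simp add: dim_insert span_of_subspace)
    have "\<rho> B \<le> \<rho> ?A' + (dim B - dim ?A')"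
      using le dim_A' \<open>?A' \<subseteq> B\<close> less.prems by (intro less.hyps) auto
    moreover have "\<rho> ?A' \<le> \<rho> A + 1" using less.prems(1) by (rule rank_span_insert_le)
    ultimately show ?thesis using le dim_A' by simp
  qed
qed

lemma qindep_subspace:
  assumes I: "subspace I" "qindep scale \<rho> I" and D: "subspace D" "D \<subseteq> I"
  shows "qindep scale \<rho> D"
proof -
  have "\<rho> I \<le> \<rho> D + (dim I - dim D)" by (rule rank_le_rank_add_dim_diff[OF D(1) I(1) D(2)])
  moreover have "dim D \<le> dim I" using D(2) by (rule dim_subset)
  moreover have "\<rho> D \<le> dim D" using D(1) by (rule rank_le_dim)
  ultimately show ?thesis using I(2) by (simp add: qindep_def)
qed

lemma exists_qindep_subspace_rank_eq:
  assumes H: "subspace H"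
  obtains I where "subspace I" "I \<subseteq> H" "qindep scale \<rho> I" "\<rho> I = \<rho> H"
proof -
  define Q where "Q n \<longleftrightarrow> (\<exists>I. subspace I \<and> I \<subseteq> H \<and> qindep scale \<rho> I \<and> dim I = n)" for n
  have "Q 0"
    using rank_le_dim[of "span {}"] span_minimal[of "{}" H] H unfolding Q_def qindep_def
    by (intro exI[of _ "span {}"]) simp
  moreover have "\<forall>n. Q n \<longrightarrow> n \<le> dim H" unfolding Q_def using dim_subset by blast
  ultimately have "\<exists>m. Q m \<and> (\<forall>n. Q n \<longrightarrow> n \<le> m)" by (rule Nat.ex_has_greatest_nat)
  then obtain m where m: "Q m" "\<forall>n. Q n \<longrightarrow> n \<le> m" by blast
  from m(1) obtain I where I: "subspace I" "I \<subseteq> H" "qindep scale \<rho> I" "dim I = m"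
    unfolding Q_def by blast
  have "\<rho> (span (insert y I)) = \<rho> I" if "y \<in> H" for y
  proof (cases "y \<in> I")
    case True
    then show ?thesis using I(1) by (simp add: span_insert_subspace)
  next
    case False
    let ?J = "span (insert y I)"
    have dim_J: "dim ?J = dim I + 1" using I(1) False by (simp add: dim_insert span_of_subspace)
    have "?J \<subseteq> H" using \<open>y \<in> H\<close> I(2) H by (intro span_minimal) auto
    moreover have "\<not> Q (m + 1)" using m(2) by auto
    ultimately have "\<not> qindep scale \<rho> ?J" using dim_J I(4) subspace_span unfolding Q_def by blast
    moreover have "\<rho> ?J \<le> dim ?J" by (rule rank_le_dim) simp
    moreover have "\<rho> I \<le> \<rho> ?J" using I(1) by (intro rank_mono) (auto intro: span_base)
    ultimately show ?thesis using dim_J I(3) by (simp add: qindep_def)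
  qed
  then have "\<rho> (span (I \<union> H)) = \<rho> I" by (rule rank_span_Un_eq[OF I(1)])
  moreover have "span (I \<union> H) = H" using I(2) H by (simp add: Un_absorb1 span_of_subspace)
  ultimately show ?thesis using that I by simp
qed

lemma exists_qcircuit_subset:
  "subspace J \<Longrightarrow> \<not> qindep scale \<rho> J \<Longrightarrow> \<exists>C. qcircuit scale \<rho> C \<and> C \<subseteq> J"
proof (induction "dim J" arbitrary: J rule: less_induct)
  case less
  show ?case
  proof (cases "qcircuit scale \<rho> J")
    case True
    then show ?thesis by blast
  next
    case False
    then obtain D where D: "subspace D" "D \<subset> J" "\<not> qindep scale \<rho> D"
      using less.prems unfolding qcircuit_def by blast
    then have "dim D < dim J" using less.prems(1) dim_psubset[of D J] by (simp add: span_of_subspace)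
    then show ?thesis using less.hyps D by blast
  qed
qed

lemma qcircuit_rank_hyperplane:
  assumes C: "qcircuit scale \<rho> C" and H: "hyperplane_of scale H C"
  shows "\<rho> H = \<rho> C"
proof -
  have Cs: "subspace C" and dep: "\<rho> C \<noteq> dim C"
    and minimal: "\<And>D. subspace D \<Longrightarrow> D \<subset> C \<Longrightarrow> \<rho> D = dim D"
    using C unfolding qcircuit_def qindep_def by auto
  obtain a where Hs: "subspace H" and a: "a \<notin> H" "span (insert a H) = C"
    using H unfolding hyperplane_of_def by blast
  have "a \<in> C" using a(2) span_base[of a "insert a H"] by simp
  with a(1) hyperplane_subset[OF H] have "H \<subset> C" by blast
  then have "\<rho> H = dim H" using minimal Hs by blast
  moreover have "\<rho> C < dim C" using dep rank_le_dim[OF Cs] by simp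
  moreover have "\<rho> H \<le> \<rho> C" using Hs Cs hyperplane_subset[OF H] by (rule rank_mono)
  ultimately show ?thesis using dim_hyperplane[OF H] by simp
qed

lemma qcircuit_subset_qcyc:
  assumes C: "qcircuit scale \<rho> C" and "C \<subseteq> X"
  shows "C \<subseteq> qcyc scale \<rho> X"
proof
  fix c assume "c \<in> C"
  have "c \<in> H" if H: "hyperplane_of scale H X" "\<rho> H < \<rho> X" for H
  proof (rule ccontr)
    assume "c \<notin> H"
    have Cs: "subspace C" using C by (simp add: qcircuit_def)
    have "\<rho> (C \<inter> H) < \<rho> C"
      by (rule rank_inter_hyperplane_less[OF H Cs \<open>C \<subseteq> X\<close> \<open>c \<in> C\<close> \<open>c \<notin> H\<close>])
    moreover have "\<rho> (C \<inter> H) = \<rho> C"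
      by (rule qcircuit_rank_hyperplane[OF C hyperplane_inter[OF H(1) Cs \<open>C \<subseteq> X\<close> \<open>c \<in> C\<close> \<open>c \<notin> H\<close>]])
    ultimately show False by simp
  qed
  with \<open>c \<in> C\<close> \<open>C \<subseteq> X\<close> show "c \<in> qcyc scale \<rho> X" by (auto simp: qcyc_iff)
qed

lemma qcyc_span_qcircuits:
  assumes "\<forall>C\<in>S. qcircuit scale \<rho> C"
  shows "qcyc scale \<rho> (span (\<Union>S)) = span (\<Union>S)"
proof
  show "qcyc scale \<rho> (span (\<Union>S)) \<subseteq> span (\<Union>S)" by (rule qcyc_subset)
  have "C \<subseteq> qcyc scale \<rho> (span (\<Union>S))" if "C \<in> S" for C
    using assms that by (intro qcircuit_subset_qcyc) (auto intro: span_base)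
  then show "span (\<Union>S) \<subseteq> qcyc scale \<rho> (span (\<Union>S))"
    by (intro span_minimal subspace_qcyc subspace_span) auto
qed

lemma exists_qcircuit_not_subset_hyperplane:
  assumes H: "hyperplane_of scale H X" and rank_H: "\<rho> H = \<rho> X"
  obtains C where "qcircuit scale \<rho> C" "C \<subseteq> X" "\<not> C \<subseteq> H"
proof -
  obtain x where Hs: "subspace H" and x: "x \<notin> H" "span (insert x H) = X"
    using H unfolding hyperplane_of_def by blast
  obtain I where I: "subspace I" "I \<subseteq> H" "qindep scale \<rho> I" "\<rho> I = \<rho> H"
    using exists_qindep_subspace_rank_eq[OF Hs] by blast
  let ?J = "span (insert x I)"
  have "x \<notin> I" using I(2) x(1) by blast
  then have "dim ?J = \<rho> X + 1"
    using I(1,3,4) rank_H by (simp add: dim_insert span_of_subspace qindep_def)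
  moreover have "?J \<subseteq> X" unfolding x(2)[symmetric] using I(2) by (intro span_mono) auto
  then have "\<rho> ?J \<le> \<rho> X" using hyperplane_subspace[OF H] by (intro rank_mono) auto
  ultimately have "\<not> qindep scale \<rho> ?J" by (simp add: qindep_def)
  then obtain C where C: "qcircuit scale \<rho> C" "C \<subseteq> ?J"
    using exists_qcircuit_subset[of ?J] by auto
  have Cs: "subspace C" using C(1) by (simp add: qcircuit_def)
  have "\<not> C \<subseteq> H"
  proof
    assume "C \<subseteq> H"
    with C(2) have "C \<subseteq> H \<inter> ?J" by blast
    also have "H \<inter> ?J = I" by (rule subspace_inter_span_insert[OF I(1) Hs I(2) x(1)])
    finally have "qindep scale \<rho> C" by (rule qindep_subspace[OF I(1) I(3) Cs])
    with C(1) show False by (simp add: qcircuit_def)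
  qed
  moreover have "C \<subseteq> X" using C(2) \<open>?J \<subseteq> X\<close> by (rule order_trans)
  ultimately show ?thesis using C(1) that by blast
qed

lemma qcyc_subset_span_qcircuits:
  assumes X: "subspace X"
  shows "qcyc scale \<rho> X \<subseteq> span (\<Union>{C. qcircuit scale \<rho> C \<and> C \<subseteq> X})"
proof
  fix x assume x: "x \<in> qcyc scale \<rho> X"
  let ?S = "span (\<Union>{C. qcircuit scale \<rho> C \<and> C \<subseteq> X})"
  show "x \<in> ?S"
  proof (rule ccontr)
    assume "x \<notin> ?S"
    have "?S \<subseteq> X" using X by (intro span_minimal) auto
    moreover have "x \<in> X" using x qcyc_subset by blast
    ultimately obtain H where H: "hyperplane_of scale H X" "?S \<subseteq> H" "x \<notin> H"
      using \<open>x \<notin> ?S\<close> by (rule exists_hyperplane[OF subspace_span X])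
    have "\<not> \<rho> H < \<rho> X" using x H(1,3) qcyc_iff by blast
    moreover have "\<rho> H \<le> \<rho> X"
      using X hyperplane_subset[OF H(1)] H(1) by (intro rank_mono) (auto simp: hyperplane_of_def)
    ultimately have "\<rho> H = \<rho> X" by simp
    then obtain C where C: "qcircuit scale \<rho> C" "C \<subseteq> X" "\<not> C \<subseteq> H"
      by (rule exists_qcircuit_not_subset_hyperplane[OF H(1)])
    then have "C \<subseteq> \<Union>{C. qcircuit scale \<rho> C \<and> C \<subseteq> X}" by blast
    then have "C \<subseteq> ?S" using span_superset by (rule order_trans)
    with C(3) H(2) show False by blast
  qed
qed

lemma qcyc_eq_span_qcircuits:
  assumes "subspace X"
  shows "qcyc scale \<rho> X = span (\<Union>{C. qcircuit scale \<rho> C \<and> C \<subseteq> X})"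
proof
  show "qcyc scale \<rho> X \<subseteq> span (\<Union>{C. qcircuit scale \<rho> C \<and> C \<subseteq> X})"
    by (rule qcyc_subset_span_qcircuits[OF assms])
  show "span (\<Union>{C. qcircuit scale \<rho> C \<and> C \<subseteq> X}) \<subseteq> qcyc scale \<rho> X"
    using qcircuit_subset_qcyc subspace_qcyc[OF assms] by (intro span_minimal) auto
qed

lemma qopen_qcyc: "subspace X \<Longrightarrow> qopen scale \<rho> (qcyc scale \<rho> X)"
  unfolding qopen_def qcyc_eq_span_qcircuits
  by (rule exI[of _ "{C. qcircuit scale \<rho> C \<and> C \<subseteq> X}"]) simp

lemma qopen_iff_qcyc_eq: "qopen scale \<rho> V \<longleftrightarrow> subspace V \<and> qcyc scale \<rho> V = V"
proof
  assume "qopen scale \<rho> V"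
  then obtain S where "\<forall>C\<in>S. qcircuit scale \<rho> C" "V = span (\<Union>S)"
    unfolding qopen_def by blast
  then show "subspace V \<and> qcyc scale \<rho> V = V" using qcyc_span_qcircuits by simp
next
  assume "subspace V \<and> qcyc scale \<rho> V = V"
  then show "qopen scale \<rho> V" using qopen_qcyc[of V] by simp
qed

lemma qcyc_qcyc: "subspace X \<Longrightarrow> qcyc scale \<rho> (qcyc scale \<rho> X) = qcyc scale \<rho> X"
  using qopen_qcyc qopen_iff_qcyc_eq by blast

end

lemma qmatroid_imp_q_matroid:
  assumes "qmatroid scale \<rho>"
  obtains Basis where "q_matroid scale Basis \<rho>"
proof -
  obtain Basis where "finite_dimensional_vector_space scale Basis"
    using assms unfolding qmatroid_def by blast
  moreover have "q_matroid_axioms scale \<rho>"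
    using assms unfolding qmatroid_def q_matroid_axioms_def by blast
  ultimately show thesis using that q_matroid.intro by blast
qed

theorem lemma4p1:
  fixes scale :: "'f::{field,finite} \<Rightarrow> 'v::ab_group_add \<Rightarrow> 'v" and \<rho> :: "'v set \<Rightarrow> nat"
  assumes "qmatroid scale \<rho>"
  shows "(\<forall>F. qflat scale \<rho> F \<longrightarrow> qflat scale \<rho> (qcyc scale \<rho> F))
    \<and> (\<forall>F. qopen scale \<rho> F \<longrightarrow> qopen scale \<rho> (qcl scale \<rho> F))
    \<and> (\<forall>V. module.subspace scale V \<longrightarrow>
          qcl scale \<rho> (qcyc scale \<rho> V) \<subseteq> qcyc scale \<rho> (qcl scale \<rho> V)
        \<and> qcyclic_flat scale \<rho> (qcl scale \<rho> (qcyc scale \<rho> V))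
        \<and> qcyclic_flat scale \<rho> (qcyc scale \<rho> (qcl scale \<rho> V)))"
proof -
  obtain Basis where "q_matroid scale Basis \<rho>" using qmatroid_imp_q_matroid[OF assms] .
  then interpret q_matroid scale Basis \<rho> .
  show ?thesis
  proof (intro conjI allI impI)
    show "qflat scale \<rho> (qcyc scale \<rho> F)" if "qflat scale \<rho> F" for F
      using that by (rule qflat_qcyc)
    show "qopen scale \<rho> (qcl scale \<rho> F)" if "qopen scale \<rho> F" for F
      using that qcyc_qcl_eq subspace_qcl by (simp add: qopen_iff_qcyc_eq)
    fix V assume V: "subspace V"
    have flat: "qflat scale \<rho> (qcyc scale \<rho> (qcl scale \<rho> V))"
      by (intro qflat_qcyc qflat_qcl V)
    show "qcl scale \<rho> (qcyc scale \<rho> V) \<subseteq> qcyc scale \<rho> (qcl scale \<rho> V)"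
      by (rule qcl_subset_qflat[OF subspace_qcyc[OF V] flat qcyc_subset_qcyc_qcl[OF V]])
    show "qcyclic_flat scale \<rho> (qcl scale \<rho> (qcyc scale \<rho> V))"
      unfolding qcyclic_flat_def qcyclic_def
      using qflat_qcl qcyc_qcl_eq subspace_qcyc qcyc_qcyc V by simp
    show "qcyclic_flat scale \<rho> (qcyc scale \<rho> (qcl scale \<rho> V))"
      unfolding qcyclic_flat_def qcyclic_def using flat qcyc_qcyc subspace_qcl by simp
  qed
qed

end
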